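(* Let $K$ be a finite simplicial complex, $(f,g)\colon|K|\to\mathbb{R}^n\times\mathbb{R}^k$ continuous, and $\alpha>0$. Let $U:=\{x\in|K| : g_i(x)\le-\alpha\text{ for all }i=1,\dots,k\}$. Then every $\alpha$-perturbation of the system $f=0\wedge g\le0$ is satisfiable if and only if every $\alpha$-perturbation $h\colon U\to\mathbb{R}^n$ of $f|_U$ has a root in $U$.
   Context: All norms are max-norms: for a function $h$ on a set $D$ with values in some $\mathbb{R}^p$, $\|h\|:=\sup_{x\in D}\max_i|h_i(x)|$. An $\alpha$-perturbation of $f|_U$ is a continuous $h\colon U\to\mathbb{R}^n$ with $\|h-f|_U\|\le\alpha$. An $\alpha$-perturbation of the system $f=0\wedge g\le0$ is a system $\tilde f=0\wedge\tilde g\le0$ with continuous $\tilde f\colon|K|\to\mathbb{R}^n$, $\tilde g\colon|K|\to\mathbb{R}^k$, $\|\tilde f-f\|\le\alpha$, $\|\tilde g-g\|\le\alpha$; it is satisfiable if there is $x\in|K|$ with $\tilde f(x)=0$ and $\tilde g_i(x)\le0$ for all $i$. *)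

theory Defs
  imports "HOL-Analysis.Analysis"
begin

text \<open>Vector-valued maps into R^m are represented as functions D -> (nat -> real),
  where only the components i < m matter. The max-norm condition
  sup_{x in D} max_i |h_i x - f_i x| <= alpha is written componentwise.\<close>

definition cont_vec :: "'a::topological_space set \<Rightarrow> nat \<Rightarrow> ('a \<Rightarrow> nat \<Rightarrow> real) \<Rightarrow> bool" where
  "cont_vec D m h \<longleftrightarrow> (\<forall>i<m. continuous_on D (\<lambda>x. h x i))"

definition close_vec :: "'a set \<Rightarrow> nat \<Rightarrow> real \<Rightarrow> ('a \<Rightarrow> nat \<Rightarrow> real) \<Rightarrow> ('a \<Rightarrow> nat \<Rightarrow> real) \<Rightarrow> bool" where
  "close_vec D m \<alpha> h f \<longleftrightarrow> (\<forall>x\<in>D. \<forall>i<m. \<bar>h x i - f x i\<bar> \<le> \<alpha>)"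

definition perturbation :: "'a::topological_space set \<Rightarrow> nat \<Rightarrow> real \<Rightarrow> ('a \<Rightarrow> nat \<Rightarrow> real) \<Rightarrow> ('a \<Rightarrow> nat \<Rightarrow> real) \<Rightarrow> bool" where
  "perturbation D m \<alpha> f h \<longleftrightarrow> cont_vec D m h \<and> close_vec D m \<alpha> h f"

definition satisfiable :: "'a set \<Rightarrow> nat \<Rightarrow> nat \<Rightarrow> ('a \<Rightarrow> nat \<Rightarrow> real) \<Rightarrow> ('a \<Rightarrow> nat \<Rightarrow> real) \<Rightarrow> bool" where
  "satisfiable D n k f g \<longleftrightarrow> (\<exists>x\<in>D. (\<forall>i<n. f x i = 0) \<and> (\<forall>i<k. g x i \<le> 0))"

end

theory Submission
  imports Defs
begin

text \<open>On \<open>U\<close> the constraints \<open>g \<le> 0\<close> survive every \<open>\<alpha>\<close>-perturbation of \<open>g\<close>, so a root of a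
  perturbation of \<open>f\<close> on all of \<open>|K|\<close> that lies in \<open>U\<close> already satisfies the perturbed system;
  this gives one direction. Conversely, a perturbation \<open>h\<close> of \<open>f|\<^sub>U\<close> extends by Tietze
  (applied to each component of \<open>h - f\<close>, which is bounded by \<open>\<alpha>\<close>) to a perturbation \<open>f'\<close>
  of \<open>f\<close> on \<open>|K|\<close>, and pairing it with the extreme perturbation \<open>g + \<alpha>\<close> forces every solution
  into \<open>U\<close>, where \<open>f' = h\<close>.\<close>

lemma perturbation_subset:
  assumes "perturbation D m \<alpha> f h" and "S \<subseteq> D"
  shows "perturbation S m \<alpha> f h"
  using assms continuous_on_subset
  by (fastforce simp: perturbation_def cont_vec_def close_vec_def)

lemma perturbation_shift:
  assumes "cont_vec D m g" and "\<alpha> \<ge> 0"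
  shows "perturbation D m \<alpha> g (\<lambda>x i. g x i + \<alpha>)"
  using assms by (auto simp: perturbation_def cont_vec_def close_vec_def intro!: continuous_on_add)

lemma closedin_componentwise_sublevel:
  assumes "cont_vec D k g"
  shows "closedin (top_of_set D) {x \<in> D. \<forall>i<k. g x i \<le> c}"
proof (cases "k = 0")
  case True
  then show ?thesis by simp
next
  case False
  then have "{x \<in> D. \<forall>i<k. g x i \<le> c} = (\<Inter>i<k. D \<inter> (\<lambda>x. g x i) -` {..c})"
    by auto
  also have "closedin (top_of_set D) \<dots>"
    using False assms
    by (intro closedin_INT continuous_closedin_preimage) (auto simp: cont_vec_def)
  finally show ?thesis .
qed

lemma perturbation_extend_closedin:
  fixes f h :: "'a::{metric_space,second_countable_topology} \<Rightarrow> nat \<Rightarrow> real"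
  assumes S: "closedin (top_of_set D) S"
    and f: "cont_vec D m f" and h: "perturbation S m \<alpha> f h" and "\<alpha> \<ge> 0"
  obtains f' where "perturbation D m \<alpha> f f'" and "\<And>x i. x \<in> S \<Longrightarrow> i < m \<Longrightarrow> f' x i = h x i"
proof -
  have "\<exists>e. continuous_on D e \<and> (\<forall>x\<in>S. e x = h x i - f x i) \<and> (\<forall>x\<in>D. \<bar>e x\<bar> \<le> \<alpha>)"
    if i: "i < m" for i
  proof -
    have "continuous_on S (\<lambda>x. h x i - f x i)"
      using h f i closedin_imp_subset[OF S] continuous_on_subset
      by (fastforce simp: perturbation_def cont_vec_def intro!: continuous_on_diff)
    moreover have "\<And>x. x \<in> S \<Longrightarrow> h x i - f x i \<in> cbox (-\<alpha>) \<alpha>"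
      using h i by (force simp: perturbation_def close_vec_def abs_le_iff)
    ultimately obtain e where "continuous_on D e" "\<And>x. x \<in> S \<Longrightarrow> e x = h x i - f x i"
      "\<And>x. x \<in> D \<Longrightarrow> e x \<in> cbox (-\<alpha>) \<alpha>"
      using Tietze_closed_interval_1[OF _ S, of _ "-\<alpha>" \<alpha>] \<open>\<alpha> \<ge> 0\<close> by auto
    then show ?thesis by (intro exI[of _ e]) (force simp: abs_le_iff)
  qed
  then obtain E where E: "\<And>i. i < m \<Longrightarrow> continuous_on D (E i)"
    "\<And>i x. i < m \<Longrightarrow> x \<in> S \<Longrightarrow> E i x = h x i - f x i"
    "\<And>i x. i < m \<Longrightarrow> x \<in> D \<Longrightarrow> \<bar>E i x\<bar> \<le> \<alpha>"
    by metis
  show thesis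
  proof
    show "perturbation D m \<alpha> f (\<lambda>x i. f x i + E i x)"
      using E(1,3) f
      by (auto simp: perturbation_def cont_vec_def close_vec_def intro!: continuous_on_add)
  qed (simp add: E(2))
qed

theorem lemma3p7:
  fixes K :: "'a::euclidean_space set set"
    and f g :: "'a \<Rightarrow> nat \<Rightarrow> real" and n k :: nat and \<alpha> :: real
  assumes "simplicial_complex K"
    and "cont_vec (\<Union>K) n f" and "cont_vec (\<Union>K) k g"
    and "\<alpha> > 0"
  defines "U \<equiv> {x \<in> \<Union>K. \<forall>i<k. g x i \<le> - \<alpha>}"
  shows "(\<forall>f' g'. perturbation (\<Union>K) n \<alpha> f f' \<and> perturbation (\<Union>K) k \<alpha> g g'
                   \<longrightarrow> satisfiable (\<Union>K) n k f' g')
         \<longleftrightarrow> (\<forall>h. perturbation U n \<alpha> f h \<longrightarrow> (\<exists>x\<in>U. \<forall>i<n. h x i = 0))"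
proof (intro iffI allI impI)
  fix h assume sat: "\<forall>f' g'. perturbation (\<Union>K) n \<alpha> f f' \<and> perturbation (\<Union>K) k \<alpha> g g'
                   \<longrightarrow> satisfiable (\<Union>K) n k f' g'"
    and h: "perturbation U n \<alpha> f h"
  have "closedin (top_of_set (\<Union>K)) U"
    unfolding U_def by (rule closedin_componentwise_sublevel[OF assms(3)])
  then obtain f' where f': "perturbation (\<Union>K) n \<alpha> f f'" "\<And>x i. x \<in> U \<Longrightarrow> i < n \<Longrightarrow> f' x i = h x i"
    using perturbation_extend_closedin[OF _ assms(2) h] \<open>\<alpha> > 0\<close> by auto
  have "satisfiable (\<Union>K) n k f' (\<lambda>x i. g x i + \<alpha>)"
    using sat f'(1) perturbation_shift[OF assms(3)] \<open>\<alpha> > 0\<close> by simp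
  then obtain x where "x \<in> \<Union>K" "\<forall>i<n. f' x i = 0" "\<forall>i<k. g x i + \<alpha> \<le> 0"
    by (auto simp: satisfiable_def)
  moreover from this have "x \<in> U" by (auto simp: U_def)
  ultimately show "\<exists>x\<in>U. \<forall>i<n. h x i = 0" using f'(2) by auto
next
  fix f' g' assume roots: "\<forall>h. perturbation U n \<alpha> f h \<longrightarrow> (\<exists>x\<in>U. \<forall>i<n. h x i = 0)"
    and pert: "perturbation (\<Union>K) n \<alpha> f f' \<and> perturbation (\<Union>K) k \<alpha> g g'"
  have "U \<subseteq> \<Union>K" by (auto simp: U_def)
  then obtain x where x: "x \<in> U" "\<forall>i<n. f' x i = 0"
    using roots pert perturbation_subset by blast
  have "g' x i \<le> 0" if "i < k" for i
    using pert x \<open>U \<subseteq> \<Union>K\<close> that by (force simp: perturbation_def close_vec_def U_def)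
  then show "satisfiable (\<Union>K) n k f' g'"
    unfolding satisfiable_def using x \<open>U \<subseteq> \<Union>K\<close> by blast
qed

end
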